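(* Let $(X,d)$ be a geometrically doubling metric space, $E\subseteq X$, $m\in\mathbb{Z}$, and $0<b_0\le B_0<\infty$, $\delta\in(0,1)$ with $12B_0\delta\le b_0$. Let $\{x^k_\alpha\}_{k\in\mathbb{Z},\alpha}$ be points of $X$ satisfying: (1) for all $k\in\mathbb{Z}$: $d(x^k_\alpha,x^k_\beta)\ge b_0\delta^k$ for $\alpha\ne\beta$, and $\min_\alpha d(x,x^k_\alpha)<B_0\delta^k$ for all $x\in X$; (2) for all $k\ge m$ and both $F\in\{E,X\setminus E\}$: $\min_{\alpha: x^k_\alpha\in F} d(x,x^k_\alpha)<B_0\delta^k$ for all $x\in F$; (3) for all $k\ge m$ and both $F\in\{E,X\setminus E\}$: $\operatorname{dist}(x^k_\alpha,X\setminus F)\ge b_0\delta^k$ whenever $x^k_\alpha\in F$; (4) there is exactly one index $\alpha_0$ with $x^m_{\alpha_0}\in E$. Let $\le$ be a dyadic partial order on the index pairs (with $c_0=b_0$, $C_0=B_0$) such that whenever $k\ge m$ and $(\ell,\beta)\le(k,\alpha)$, the points $x^\ell_\beta$ and $x^k_\alpha$ lie in the same set $F\in\{E,X\setminus E\}$. For each $\alpha$ define $\bar Q^m_\alpha=\overline{\{x^\ell_\beta:(\ell,\beta)\le(m,\alpha)\}}$ and $\tilde Q^m_{\alpha_0}=X\setminus\bigcup_{\gamma\ne\alpha_0}\bar Q^m_\gamma$. Then $\tilde Q^m_{\alpha_0}\subseteq E\subseteq\bar Q^m_{\alpha_0}$.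
   Context: Notation: $\operatorname{dist}(x,A)=\inf_{a\in A}d(x,a)$; closures are taken in $X$. Given points $\{x^k_\alpha\}$ and constants $\delta\in(0,1)$, $0<c_0\le C_0$, a dyadic partial order is a partial order $\le$ on the index pairs $(k,\alpha)$ such that: (a) every $(k+1,\beta)$ satisfies $(k+1,\beta)\le(k,\alpha)$ for exactly one $\alpha$; (b) for $\ell\le k$, $(\ell,\beta)\le(k,\alpha)$ iff $\ell=k$ and $\beta=\alpha$; (c) for $\ell>k$, $(\ell,\beta)\le(k,\alpha)$ iff there exist $\eta_k=\alpha,\eta_{k+1},\dots,\eta_\ell=\beta$ with $(j+1,\eta_{j+1})\le(j,\eta_j)$ for all $j\in\{k,\dots,\ell-1\}$; (d) $d(x^{k+1}_\beta,x^k_\alpha)<\tfrac12c_0\delta^k \Rightarrow (k+1,\beta)\le(k,\alpha)\Rightarrow d(x^{k+1}_\beta,x^k_\alpha)<C_0\delta^k$. A space is geometrically doubling if there is $A_1\in\mathbb{N}$ such that every open ball $B(x,r)=\{y:d(x,y)<r\}$ can be covered by at most $A_1$ open balls of radius $r/2$. *)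

theory Defs
  imports "HOL-Analysis.Analysis"
begin

definition geometrically_doubling :: "'a::metric_space itself \<Rightarrow> bool" where
  "geometrically_doubling _ \<longleftrightarrow>
     (\<exists>A1::nat. \<forall>(x::'a) (r::real). \<exists>C. finite C \<and> card C \<le> A1 \<and>
         ball x r \<subseteq> (\<Union>c\<in>C. ball c (r/2)))"

definition dyadic_partial_order ::
  "(int \<Rightarrow> 'i \<Rightarrow> 'a::metric_space) \<Rightarrow> (int \<Rightarrow> 'i set) \<Rightarrow> real \<Rightarrow> real \<Rightarrow> real \<Rightarrow>
   (int \<times> 'i \<Rightarrow> int \<times> 'i \<Rightarrow> bool) \<Rightarrow> bool" where
  "dyadic_partial_order x I \<delta> c0 C0 leq \<longleftrightarrow>
     \<comment> \<open>partial order on the index pairs\<close>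
     (\<forall>k. \<forall>\<alpha>\<in>I k. leq (k,\<alpha>) (k,\<alpha>)) \<and>
     (\<forall>k \<alpha> l \<beta>. \<alpha> \<in> I k \<longrightarrow> \<beta> \<in> I l \<longrightarrow> leq (k,\<alpha>) (l,\<beta>) \<longrightarrow> leq (l,\<beta>) (k,\<alpha>)
        \<longrightarrow> (k,\<alpha>) = (l,\<beta>)) \<and>
     (\<forall>k \<alpha> l \<beta> j \<gamma>. \<alpha> \<in> I k \<longrightarrow> \<beta> \<in> I l \<longrightarrow> \<gamma> \<in> I j \<longrightarrow>
        leq (k,\<alpha>) (l,\<beta>) \<longrightarrow> leq (l,\<beta>) (j,\<gamma>) \<longrightarrow> leq (k,\<alpha>) (j,\<gamma>)) \<and>
     \<comment> \<open>(a)\<close>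
     (\<forall>k. \<forall>\<beta>\<in>I (k+1). \<exists>!\<alpha>. \<alpha> \<in> I k \<and> leq (k+1,\<beta>) (k,\<alpha>)) \<and>
     \<comment> \<open>(b)\<close>
     (\<forall>l k. \<forall>\<beta>\<in>I l. \<forall>\<alpha>\<in>I k. l \<le> k \<longrightarrow>
        (leq (l,\<beta>) (k,\<alpha>) \<longleftrightarrow> l = k \<and> \<beta> = \<alpha>)) \<and>
     \<comment> \<open>(c)\<close>
     (\<forall>l k. \<forall>\<beta>\<in>I l. \<forall>\<alpha>\<in>I k. l > k \<longrightarrow>
        (leq (l,\<beta>) (k,\<alpha>) \<longleftrightarrow>
          (\<exists>\<eta>::int \<Rightarrow> 'i. \<eta> k = \<alpha> \<and> \<eta> l = \<beta> \<and> (\<forall>j\<in>{k..l}. \<eta> j \<in> I j) \<and>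
             (\<forall>j\<in>{k..l-1}. leq (j+1, \<eta> (j+1)) (j, \<eta> j))))) \<and>
     \<comment> \<open>(d)\<close>
     (\<forall>k. \<forall>\<alpha>\<in>I k. \<forall>\<beta>\<in>I (k+1).
        (dist (x (k+1) \<beta>) (x k \<alpha>) < c0/2 * \<delta> powi k \<longrightarrow> leq (k+1,\<beta>) (k,\<alpha>)) \<and>
        (leq (k+1,\<beta>) (k,\<alpha>) \<longrightarrow> dist (x (k+1) \<beta>) (x k \<alpha>) < C0 * \<delta> powi k))"

end

theory Submission
  imports Defs
begin

text \<open>
  Fix a point \<open>y\<close> and a scale \<open>m + n\<close>.  By the covering property of the
  side \<open>F \<in> {E, -E}\<close> containing \<open>y\<close>, some point of generation \<open>m + n\<close> lying in \<open>F\<close> is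
  within \<open>B0 \<delta>^(m+n)\<close> of \<open>y\<close>; following parents upwards it has an ancestor \<open>\<gamma>\<close> of
  generation \<open>m\<close>, which lies in \<open>F\<close> by compatibility and is within \<open>2 B0 \<delta>^m\<close> of \<open>y\<close>,
  because the parent steps form a geometric series with ratio \<open>\<delta> \<le> 1/2\<close>.
  If \<open>y \<in> E\<close>, the ancestor must be \<open>\<alpha>0\<close> at every scale, so \<open>y\<close> is a limit of descendants
  of \<open>\<alpha>0\<close>, i.e. \<open>y \<in> Qbar \<alpha>0\<close>.  If \<open>y \<notin> E\<close>, the ancestors range over the finitely many
  generation-\<open>m\<close> points near \<open>y\<close> (finite by geometric doubling and separation), so one
  ancestor \<open>\<gamma> \<noteq> \<alpha>0\<close> occurs for infinitely many scales and \<open>y \<in> Qbar \<gamma>\<close>, i.e. \<open>y \<notin> Qtilde\<close>.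
\<close>

subsection \<open>Separated sets in geometrically doubling spaces\<close>

lemma doubling_cover_iter:
  assumes "geometrically_doubling TYPE('a::metric_space)"
  shows "\<exists>C. finite C \<and> ball (y::'a) r \<subseteq> (\<Union>c\<in>C. ball c (r / 2^n))"
proof (induction n)
  case 0
  show ?case by (rule exI[of _ "{y}"]) auto
next
  case (Suc n)
  then obtain C where C: "finite C" "ball y r \<subseteq> (\<Union>c\<in>C. ball c (r / 2^n))" by blast
  have "\<forall>c::'a. \<exists>D. finite D \<and> ball c (r / 2^n) \<subseteq> (\<Union>d\<in>D. ball d (r / 2^n / 2))"
    using assms unfolding geometrically_doubling_def by blast
  then obtain f where f: "\<And>c::'a. finite (f c) \<and> ball c (r / 2^n) \<subseteq> (\<Union>d\<in>f c. ball d (r / 2^n / 2))"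
    by metis
  have "ball y r \<subseteq> (\<Union>d\<in>(\<Union>c\<in>C. f c). ball d (r / 2^Suc n))"
  proof
    fix z assume "z \<in> ball y r"
    then obtain c where "c \<in> C" "z \<in> ball c (r / 2^n)" using C by blast
    then obtain d where "d \<in> f c" "z \<in> ball d (r / 2^n / 2)" using f by blast
    then show "z \<in> (\<Union>d\<in>(\<Union>c\<in>C. f c). ball d (r / 2^Suc n))"
      using \<open>c \<in> C\<close> by (auto simp: field_simps)
  qed
  moreover have "finite (\<Union>c\<in>C. f c)" using C f by blast
  ultimately show ?case by blast
qed

text \<open>In a doubling space, an \<open>s\<close>-separated set contained in a ball is finite: cover the
  ball by balls of radius less than \<open>s/2\<close>, each of which contains at most one point.\<close>
lemma separated_in_ball_finite:
  assumes "geometrically_doubling TYPE('a::metric_space)" "0 < s"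
    and "P \<subseteq> ball (y::'a) R"
    and "\<And>p q. p \<in> P \<Longrightarrow> q \<in> P \<Longrightarrow> p \<noteq> q \<Longrightarrow> s \<le> dist p q"
  shows "finite P"
proof -
  obtain n where "R / (s/2) < 2^n" using real_arch_pow[of 2] by auto
  then have small: "R / 2^n < s/2" using assms(2) by (simp add: field_simps)
  obtain C where C: "finite C" "ball y R \<subseteq> (\<Union>c\<in>C. ball c (R / 2^n))"
    using doubling_cover_iter[OF assms(1), of y R n] by blast
  have "finite (P \<inter> ball c (R / 2^n))" for c
  proof (cases "P \<inter> ball c (R / 2^n) = {}")
    case False
    then obtain p where p: "p \<in> P" "dist c p < R / 2^n" by auto
    have "P \<inter> ball c (R / 2^n) \<subseteq> {p}"
    proof
      fix q assume q: "q \<in> P \<inter> ball c (R / 2^n)"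
      have "dist p q \<le> dist c p + dist c q" by (metis dist_commute dist_triangle)
      also have "\<dots> < s"
      proof -
        have "dist c q < R / 2^n" using q by simp
        with p(2) small show ?thesis by linarith
      qed
      finally have "\<not> s \<le> dist p q" by simp
      then show "q \<in> {p}" using assms(4) p(1) q by blast
    qed
    then show ?thesis by (rule finite_subset) simp
  qed simp
  moreover have "P \<subseteq> (\<Union>c\<in>C. P \<inter> ball c (R / 2^n))" using C assms(3) by blast
  ultimately show ?thesis using C(1) by (meson finite_UN_I finite_subset)
qed

lemma separated_family_near_finite:
  assumes "geometrically_doubling TYPE('a::metric_space)" "0 < s"
    and "\<And>i j. i \<in> J \<Longrightarrow> j \<in> J \<Longrightarrow> i \<noteq> j \<Longrightarrow> s \<le> dist (p i) (p j)"
  shows "finite {i \<in> J. dist (y::'a) (p i) < R}"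
proof -
  let ?J = "{i \<in> J. dist y (p i) < R}"
  have "inj_on p ?J"
    using assms(2,3) by (force intro: inj_onI)
  moreover have "finite (p ` ?J)"
    by (rule separated_in_ball_finite[OF assms(1,2), of _ y R]) (use assms(3) in auto)
  ultimately show ?thesis using finite_imageD by blast
qed

subsection \<open>Ancestors in a dyadic partial order\<close>

lemma dyadic_trans:
  assumes "dyadic_partial_order x I \<delta> c0 C0 leq"
    and "\<alpha> \<in> I k" "\<beta> \<in> I l" "\<gamma> \<in> I j" "leq (k,\<alpha>) (l,\<beta>)" "leq (l,\<beta>) (j,\<gamma>)"
  shows "leq (k,\<alpha>) (j,\<gamma>)"
proof -
  have "\<forall>k \<alpha> l \<beta> j \<gamma>. \<alpha> \<in> I k \<longrightarrow> \<beta> \<in> I l \<longrightarrow> \<gamma> \<in> I j \<longrightarrow>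
          leq (k,\<alpha>) (l,\<beta>) \<longrightarrow> leq (l,\<beta>) (j,\<gamma>) \<longrightarrow> leq (k,\<alpha>) (j,\<gamma>)"
    using assms(1) unfolding dyadic_partial_order_def by (elim conjE)
  with assms(2-) show ?thesis by blast
qed

lemma dyadic_refl:
  assumes "dyadic_partial_order x I \<delta> c0 C0 leq" "\<alpha> \<in> I k"
  shows "leq (k,\<alpha>) (k,\<alpha>)"
proof -
  have "\<forall>k. \<forall>\<alpha>\<in>I k. leq (k,\<alpha>) (k,\<alpha>)"
    using assms(1) unfolding dyadic_partial_order_def by (elim conjE)
  with assms(2) show ?thesis by blast
qed

lemma dyadic_parent:
  assumes "dyadic_partial_order x I \<delta> c0 C0 leq" "\<beta> \<in> I (k+1)"
  obtains \<alpha> where "\<alpha> \<in> I k" "leq (k+1,\<beta>) (k,\<alpha>)"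
    "dist (x (k+1) \<beta>) (x k \<alpha>) < C0 * \<delta> powi k"
proof -
  have "\<forall>k. \<forall>\<beta>\<in>I (k+1). \<exists>!\<alpha>. \<alpha> \<in> I k \<and> leq (k+1,\<beta>) (k,\<alpha>)"
    using assms(1) unfolding dyadic_partial_order_def by (elim conjE)
  moreover have "\<forall>k. \<forall>\<alpha>\<in>I k. \<forall>\<beta>\<in>I (k+1).
        (dist (x (k+1) \<beta>) (x k \<alpha>) < c0/2 * \<delta> powi k \<longrightarrow> leq (k+1,\<beta>) (k,\<alpha>)) \<and>
        (leq (k+1,\<beta>) (k,\<alpha>) \<longrightarrow> dist (x (k+1) \<beta>) (x k \<alpha>) < C0 * \<delta> powi k)"
    using assms(1) unfolding dyadic_partial_order_def by (elim conjE)
  ultimately have parent: "\<exists>!\<alpha>. \<alpha> \<in> I k \<and> leq (k+1,\<beta>) (k,\<alpha>)"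
    and near: "\<And>\<alpha>. \<alpha> \<in> I k \<Longrightarrow> leq (k+1,\<beta>) (k,\<alpha>) \<Longrightarrow> dist (x (k+1) \<beta>) (x k \<alpha>) < C0 * \<delta> powi k"
    using assms(2) by blast+
  from parent obtain \<alpha> where "\<alpha> \<in> I k" "leq (k+1,\<beta>) (k,\<alpha>)" by blast
  with near that show ?thesis by blast
qed

text \<open>Following parents for \<open>n\<close> generations: the distances form a geometric series, so
  for \<open>\<delta> \<le> 1/2\<close> the ancestor is within \<open>2 C0 (\<delta>^k - \<delta>^(k+n))\<close>.\<close>
lemma dyadic_ancestor_dist:
  assumes dyadic: "dyadic_partial_order x I \<delta> c0 C0 leq"
    and "0 < \<delta>" "\<delta> \<le> 1/2" "0 \<le> C0"
  shows "\<alpha> \<in> I (k + int n) \<Longrightarrow> \<exists>\<gamma>\<in>I k. leq (k + int n, \<alpha>) (k, \<gamma>) \<and>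
      dist (x (k + int n) \<alpha>) (x k \<gamma>) \<le> 2 * C0 * (\<delta> powi k - \<delta> powi (k + int n))"
proof (induction n arbitrary: \<alpha>)
  case 0
  then show ?case using dyadic_refl[OF dyadic] by fastforce
next
  case (Suc n)
  define j where "j = k + int n"
  have j1: "k + int (Suc n) = j + 1" unfolding j_def by simp
  obtain \<alpha>' where \<alpha>': "\<alpha>' \<in> I j" "leq (j+1,\<alpha>) (j,\<alpha>')"
    and step: "dist (x (j+1) \<alpha>) (x j \<alpha>') < C0 * \<delta> powi j"
    using dyadic_parent[OF dyadic] Suc.prems unfolding j1 by blast
  obtain \<gamma> where \<gamma>: "\<gamma> \<in> I k" "leq (j,\<alpha>') (k,\<gamma>)"
    and rest: "dist (x j \<alpha>') (x k \<gamma>) \<le> 2 * C0 * (\<delta> powi k - \<delta> powi j)"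
    using Suc.IH \<alpha>'(1) unfolding j_def by blast
  have "C0 * (\<delta> powi j * (2 * \<delta>)) \<le> C0 * \<delta> powi j"
    using assms(2-4) by (intro mult_left_mono) auto
  moreover have "\<delta> powi (j+1) = \<delta> powi j * \<delta>"
    using assms(2) by (simp add: power_int_add)
  ultimately have geometric: "C0 * \<delta> powi j \<le> 2 * C0 * (\<delta> powi j - \<delta> powi (j+1))"
    by (simp add: algebra_simps)
  have "dist (x (j+1) \<alpha>) (x k \<gamma>) \<le> dist (x (j+1) \<alpha>) (x j \<alpha>') + dist (x j \<alpha>') (x k \<gamma>)"
    by (rule dist_triangle)
  also have "\<dots> \<le> 2 * C0 * (\<delta> powi k - \<delta> powi (j+1))"
    using step rest geometric by (simp add: algebra_simps)
  finally show ?case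
    using dyadic_trans[OF dyadic Suc.prems[unfolded j1] \<alpha>'(1) \<gamma>(1) \<alpha>'(2) \<gamma>(2)] \<gamma>(1)
    unfolding j1 by blast
qed

lemma dyadic_ancestor_near:
  assumes dyadic: "dyadic_partial_order x I \<delta> c0 C0 leq"
    and "0 < \<delta>" "\<delta> \<le> 1/2" "0 \<le> C0"
    and \<alpha>: "\<alpha> \<in> I (k + int n)" and near: "dist y (x (k + int n) \<alpha>) < C0 * \<delta> powi (k + int n)"
  obtains \<gamma> where "\<gamma> \<in> I k" "leq (k + int n, \<alpha>) (k, \<gamma>)" "dist y (x k \<gamma>) < 2 * C0 * \<delta> powi k"
proof -
  obtain \<gamma> where \<gamma>: "\<gamma> \<in> I k" "leq (k + int n, \<alpha>) (k, \<gamma>)"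
    and anc: "dist (x (k + int n) \<alpha>) (x k \<gamma>) \<le> 2 * C0 * (\<delta> powi k - \<delta> powi (k + int n))"
    using dyadic_ancestor_dist[OF dyadic assms(2-4) \<alpha>] by blast
  have "0 \<le> C0 * \<delta> powi (k + int n)" using assms(2,4) by simp
  moreover have "dist y (x k \<gamma>) \<le> dist y (x (k + int n) \<alpha>) + dist (x (k + int n) \<alpha>) (x k \<gamma>)"
    by (rule dist_triangle)
  ultimately have "dist y (x k \<gamma>) < 2 * C0 * \<delta> powi k"
    using near anc by (simp add: algebra_simps)
  with \<gamma> that show ?thesis by blast
qed

subsection \<open>A closure criterion\<close>

lemma closure_geometric_approx:
  fixes y :: "'a::metric_space"
  assumes "0 < \<delta>" "\<delta> < 1"
    and approx: "\<exists>\<^sub>F n in sequentially. \<exists>s\<in>S. dist s y < c * \<delta> ^ n"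
  shows "y \<in> closure S"
  unfolding closure_approachable
proof (intro allI impI)
  fix \<epsilon> :: real assume "0 < \<epsilon>"
  obtain N where N: "c * \<delta> ^ N < \<epsilon>"
  proof (cases "c \<le> 0")
    case True
    with \<open>0 < \<epsilon>\<close> assms(1) show ?thesis
      by (intro that[of 0]) auto
  next
    case False
    then obtain N where "\<delta> ^ N < \<epsilon> / c"
      using real_arch_pow_inv[of "\<epsilon> / c" \<delta>] \<open>0 < \<epsilon>\<close> assms(2) by auto
    with False show ?thesis by (intro that[of N]) (simp add: field_simps mult.commute)
  qed
  obtain n s where "n \<ge> N" "s \<in> S" "dist s y < c * \<delta> ^ n"
    using approx unfolding frequently_sequentially by blast
  moreover have "c * \<delta> ^ n \<le> \<epsilon>"
  proof (cases "c \<le> 0")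
    case True
    then show ?thesis using assms(1) \<open>0 < \<epsilon>\<close> by (smt (verit) mult_nonpos_nonneg zero_le_power)
  next
    case False
    have "c * \<delta> ^ n \<le> c * \<delta> ^ N"
      using False assms(1,2) \<open>n \<ge> N\<close> by (intro mult_left_mono power_decreasing) auto
    with N show ?thesis by linarith
  qed
  ultimately show "\<exists>s\<in>S. dist s y < \<epsilon>" by force
qed

text \<open>The points descending from \<open>(k, \<gamma>)\<close>; the closure of this set is the dyadic
  cube \<open>Qbar\<close> of the theorem.\<close>
definition descendants ::
  "(int \<Rightarrow> 'i \<Rightarrow> 'a) \<Rightarrow> (int \<Rightarrow> 'i set) \<Rightarrow> (int \<times> 'i \<Rightarrow> int \<times> 'i \<Rightarrow> bool) \<Rightarrow> int \<Rightarrow> 'i \<Rightarrow> 'a set"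
  where "descendants x I leq k \<gamma> = {x l \<beta> | l \<beta>. \<beta> \<in> I l \<and> leq (l,\<beta>) (k,\<gamma>)}"

lemma closure_descendants_if_frequent:
  fixes x :: "int \<Rightarrow> 'i \<Rightarrow> 'a::metric_space"
  assumes "0 < \<delta>" "\<delta> < 1"
    and freq: "\<exists>\<^sub>F n in sequentially. \<exists>\<alpha>\<in>I (k + int n). leq (k + int n, \<alpha>) (k, \<gamma>) \<and>
                 dist y (x (k + int n) \<alpha>) < C0 * \<delta> powi (k + int n)"
  shows "y \<in> closure (descendants x I leq k \<gamma>)"
proof (rule closure_geometric_approx[OF assms(1,2)])
  show "\<exists>\<^sub>F n in sequentially. \<exists>s\<in>descendants x I leq k \<gamma>. dist s y < C0 * \<delta> powi k * \<delta> ^ n"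
    using freq
  proof (rule frequently_elim1)
    fix n assume "\<exists>\<alpha>\<in>I (k + int n). leq (k + int n, \<alpha>) (k, \<gamma>) \<and>
                    dist y (x (k + int n) \<alpha>) < C0 * \<delta> powi (k + int n)"
    then obtain \<alpha> where "x (k + int n) \<alpha> \<in> descendants x I leq k \<gamma>"
      and "dist (x (k + int n) \<alpha>) y < C0 * \<delta> powi k * \<delta> ^ n"
      unfolding descendants_def using assms(1) by (auto simp: dist_commute power_int_add mult.assoc)
    then show "\<exists>s\<in>descendants x I leq k \<gamma>. dist s y < C0 * \<delta> powi k * \<delta> ^ n" by blast
  qed
qed

lemma pigeonhole_frequently:
  assumes "finite A" "\<And>n::nat. \<exists>a\<in>A. P n a"
  shows "\<exists>a\<in>A. \<exists>\<^sub>F n in sequentially. P n a"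
proof (rule frequently_bex_finite[OF assms(1)])
  show "\<exists>\<^sub>F n in sequentially. \<exists>a\<in>A. P n a"
    using assms(2) by (intro eventually_frequently always_eventually) auto
qed

theorem lemma3p5:
  fixes x :: "int \<Rightarrow> 'i \<Rightarrow> 'a::metric_space"
    and I :: "int \<Rightarrow> 'i set"
    and E :: "'a set"
    and m :: int
    and b0 B0 \<delta> :: real
    and leq :: "int \<times> 'i \<Rightarrow> int \<times> 'i \<Rightarrow> bool"
    and \<alpha>0 :: 'i
  assumes doubling: "geometrically_doubling TYPE('a)"
    and params: "0 < b0" "b0 \<le> B0" "0 < \<delta>" "\<delta> < 1" "12 * B0 * \<delta> \<le> b0"
    and sep: "\<And>k \<alpha> \<beta>. \<alpha> \<in> I k \<Longrightarrow> \<beta> \<in> I k \<Longrightarrow> \<alpha> \<noteq> \<beta> \<Longrightarrow>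
                 dist (x k \<alpha>) (x k \<beta>) \<ge> b0 * \<delta> powi k"
    and cover: "\<And>k y. \<exists>\<alpha>\<in>I k. dist y (x k \<alpha>) < B0 * \<delta> powi k"
    and cover_F: "\<And>k F y. k \<ge> m \<Longrightarrow> F \<in> {E, - E} \<Longrightarrow> y \<in> F \<Longrightarrow>
                 \<exists>\<alpha>\<in>I k. x k \<alpha> \<in> F \<and> dist y (x k \<alpha>) < B0 * \<delta> powi k"
    and sep_F: "\<And>k F \<alpha> y. k \<ge> m \<Longrightarrow> F \<in> {E, - E} \<Longrightarrow> \<alpha> \<in> I k \<Longrightarrow> x k \<alpha> \<in> F \<Longrightarrow>
                 y \<in> - F \<Longrightarrow> dist (x k \<alpha>) y \<ge> b0 * \<delta> powi k"
    and alpha0: "\<alpha>0 \<in> I m" "x m \<alpha>0 \<in> E"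
    and alpha0_unique: "\<And>\<alpha>. \<alpha> \<in> I m \<Longrightarrow> x m \<alpha> \<in> E \<Longrightarrow> \<alpha> = \<alpha>0"
    and dyadic: "dyadic_partial_order x I \<delta> b0 B0 leq"
    and compat: "\<And>k \<alpha> l \<beta>. k \<ge> m \<Longrightarrow> \<alpha> \<in> I k \<Longrightarrow> \<beta> \<in> I l \<Longrightarrow> leq (l,\<beta>) (k,\<alpha>) \<Longrightarrow>
                 (x l \<beta> \<in> E \<longleftrightarrow> x k \<alpha> \<in> E)"
  defines "Qbar \<equiv> (\<lambda>\<alpha>. closure {x l \<beta> | l \<beta>. \<beta> \<in> I l \<and> leq (l,\<beta>) (m,\<alpha>)})"
  defines "Qtilde \<equiv> UNIV - (\<Union>\<gamma>\<in>I m - {\<alpha>0}. Qbar \<gamma>)"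
  shows "Qtilde \<subseteq> E \<and> E \<subseteq> Qbar \<alpha>0"
proof -
  have "12 * B0 * \<delta> \<le> B0" using params by linarith
  then have \<delta>_half: "\<delta> \<le> 1/2" using params by (simp add: field_simps)
  have "0 \<le> B0" using params by linarith
  have Qbar: "Qbar \<gamma> = closure (descendants x I leq m \<gamma>)" for \<gamma>
    unfolding Qbar_def descendants_def ..
  have witness: "\<exists>\<gamma>\<in>I m. x m \<gamma> \<in> F \<and> dist y (x m \<gamma>) < 2 * B0 * \<delta> powi m \<and>
      (\<exists>\<alpha>\<in>I (m + int n). leq (m + int n, \<alpha>) (m, \<gamma>) \<and>
         dist y (x (m + int n) \<alpha>) < B0 * \<delta> powi (m + int n))"
    if F: "F \<in> {E, - E}" "y \<in> F" for F y n
  proof -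
    obtain \<alpha> where \<alpha>: "\<alpha> \<in> I (m + int n)" "x (m + int n) \<alpha> \<in> F"
      and near: "dist y (x (m + int n) \<alpha>) < B0 * \<delta> powi (m + int n)"
      using cover_F[of "m + int n" F y] F by auto
    obtain \<gamma> where \<gamma>: "\<gamma> \<in> I m" "leq (m + int n, \<alpha>) (m, \<gamma>)" "dist y (x m \<gamma>) < 2 * B0 * \<delta> powi m"
      using dyadic_ancestor_near[OF dyadic params(3) \<delta>_half \<open>0 \<le> B0\<close> \<alpha>(1) near] by blast
    have "x m \<gamma> \<in> F" using compat[OF _ \<gamma>(1) \<alpha>(1) \<gamma>(2)] \<alpha>(2) F(1) by auto
    with \<alpha>(1) \<gamma> near show ?thesis by blast
  qed
  have "y \<in> Qbar \<alpha>0" if "y \<in> E" for y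
  proof -
    text \<open>The only generation-\<open>m\<close> point in \<open>E\<close> is \<open>\<alpha>0\<close>, so it is the ancestor at every scale.\<close>
    have "\<exists>\<alpha>\<in>I (m + int n). leq (m + int n, \<alpha>) (m, \<alpha>0) \<and>
            dist y (x (m + int n) \<alpha>) < B0 * \<delta> powi (m + int n)" for n
      using witness[of E y n] that alpha0_unique by auto
    then show ?thesis unfolding Qbar
      by (intro closure_descendants_if_frequent[OF params(3,4)] eventually_frequently always_eventually) auto
  qed
  moreover have "y \<in> E" if "y \<in> Qtilde" for y
  proof (rule ccontr)
    assume "y \<notin> E"
    let ?near = "{\<gamma> \<in> {\<gamma> \<in> I m. x m \<gamma> \<notin> E}. dist y (x m \<gamma>) < 2 * B0 * \<delta> powi m}"
    have "finite ?near"
      by (rule separated_family_near_finite[OF doubling, of "b0 * \<delta> powi m"]) (use sep params in auto)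
    moreover have "\<exists>\<gamma>\<in>?near. \<exists>\<alpha>\<in>I (m + int n). leq (m + int n, \<alpha>) (m, \<gamma>) \<and>
                     dist y (x (m + int n) \<alpha>) < B0 * \<delta> powi (m + int n)" for n
      using witness[of "- E" y n] \<open>y \<notin> E\<close> by auto
    ultimately have "\<exists>\<gamma>\<in>?near. \<exists>\<^sub>F n in sequentially. \<exists>\<alpha>\<in>I (m + int n).
                       leq (m + int n, \<alpha>) (m, \<gamma>) \<and> dist y (x (m + int n) \<alpha>) < B0 * \<delta> powi (m + int n)"
      by (rule pigeonhole_frequently)
    then obtain \<gamma> where \<gamma>: "\<gamma> \<in> I m" "x m \<gamma> \<notin> E"
      and freq: "\<exists>\<^sub>F n in sequentially. \<exists>\<alpha>\<in>I (m + int n). leq (m + int n, \<alpha>) (m, \<gamma>) \<and>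
                   dist y (x (m + int n) \<alpha>) < B0 * \<delta> powi (m + int n)"
      by blast
    have "y \<in> Qbar \<gamma>" unfolding Qbar using freq by (rule closure_descendants_if_frequent[OF params(3,4)])
    with \<gamma> alpha0(2) that show False unfolding Qtilde_def by blast
  qed
  ultimately show ?thesis by blast
qed

end
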